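(* Let $n \in \mathbb{N}$ and let $p = (p_1,\ldots,p_n) \in \Delta_n$. Then \[ \frac{n \sum_{i=1}^n p_i^2 - 1}{2\,(n\|p\|_\infty + 1)} \;\le\; \sum_{i=1}^n p_i \log(p_i) + \log(n) \;\le\; n \sum_{i=1}^n p_i^2 - 1 . \] In particular, whenever $p \neq \frac{1}{n}1_n$ (so that $n\sum_i p_i^2 - 1 > 0$), \[ \frac{1}{2(n \|p\|_\infty + 1)} \le \frac{\sum_{i = 1}^{n} p_i \log(p_i) + \log(n)}{n \sum_{i = 1}^{n} p_i^2 - 1} \le 1. \]
   Context: $\Delta_n := \{a \in \mathbb{R}_+^n : \sum_{i=1}^n a_i = 1\}$ is the probability simplex, $\|p\|_\infty = \max_i |p_i|$, $1_n$ is the all-ones vector in $\mathbb{R}^n$, and the convention $0 \log 0 = 0$ is used. *)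

theory Defs
  imports "HOL-Analysis.Analysis"
begin

definition prob_simplex :: "nat \<Rightarrow> (nat \<Rightarrow> real) set" where
  "prob_simplex n = {a. (\<forall>i\<in>{1..n}. 0 \<le> a i) \<and> (\<Sum>i=1..n. a i) = 1}"

definition xlogx :: "real \<Rightarrow> real" where
  "xlogx x = (if x = 0 then 0 else x * ln x)"

definition sup_norm :: "nat \<Rightarrow> (nat \<Rightarrow> real) \<Rightarrow> real" where
  "sup_norm n p = Max ((\<lambda>i. \<bar>p i\<bar>) ` {1..n})"

end

theory Submission
  imports Defs
begin

text \<open>
  With \<open>q\<^sub>i = n p\<^sub>i\<close> and \<open>\<phi>(q) = q log q - q + 1\<close>, the entropy gap
  \<open>\<Sum> p\<^sub>i log p\<^sub>i + log n\<close> equals \<open>(1/n) \<Sum> \<phi>(q\<^sub>i)\<close>, while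
  \<open>n \<Sum> p\<^sub>i\<^sup>2 - 1 = (1/n) \<Sum> (q\<^sub>i - 1)\<^sup>2\<close>. Both bounds then follow termwise from
  \<open>(q - 1)\<^sup>2 / (2 max 1 q) \<le> \<phi>(q) \<le> (q - 1)\<^sup>2\<close> for \<open>q \<ge> 0\<close>, using
  \<open>q\<^sub>i \<le> n \<parallel>p\<parallel>\<^sub>\<infinity>\<close>; the lower bound for \<open>q \<ge> 1\<close> and for \<open>q \<le> 1\<close> comes from
  monotonicity of the difference, which vanishes at \<open>q = 1\<close>.
\<close>

lemma ln_ge_one_minus_inverse:
  fixes x :: real assumes "0 < x"
  shows "1 - 1 / x \<le> ln x"
  using ln_le_minus_one[of "1 / x"] assms by (simp add: ln_div)

lemma xlnx_gap_ge_half_square: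
  fixes q :: real assumes "0 < q" "q \<le> 1"
  shows "(1 - q)^2 / 2 \<le> q * ln q - q + 1"
proof -
  let ?k = "\<lambda>x::real. x * ln x - x + 1 - (1 - x)^2 / 2"
  have "?k 1 \<le> ?k q"
  proof (rule DERIV_nonpos_imp_nonincreasing[OF assms(2)])
    fix x :: real assume "q \<le> x" "x \<le> 1"
    with assms have "0 < x" by linarith
    then have "(?k has_real_derivative ln x + 1 - x) (at x)"
      by (auto intro!: derivative_eq_intros simp: field_simps power2_eq_square)
    with ln_le_minus_one[OF \<open>0 < x\<close>] show "\<exists>y. (?k has_real_derivative y) (at x) \<and> y \<le> 0"
      by auto
  qed
  then show ?thesis by simp
qed

lemma xlnx_gap_ge_square_div:
  fixes q :: real assumes "1 \<le> q"
  shows "(q - 1)^2 / (2 * q) \<le> q * ln q - q + 1"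
proof -
  let ?h = "\<lambda>x::real. x * ln x - x + 1 - (x - 1)^2 / (2 * x)"
  have "?h 1 \<le> ?h q"
  proof (rule DERIV_nonneg_imp_nondecreasing[OF assms])
    fix x :: real assume "1 \<le> x"
    then have "0 < x" by linarith
    then have "(?h has_real_derivative ln x - (1 - 1 / x) + (x - 1)^2 / (2 * x^2)) (at x)"
      by (auto intro!: derivative_eq_intros simp: field_simps power2_eq_square)
    moreover have "0 \<le> ln x - (1 - 1 / x) + (x - 1)^2 / (2 * x^2)"
      using ln_ge_one_minus_inverse[OF \<open>0 < x\<close>] by simp
    ultimately show "\<exists>y. (?h has_real_derivative y) (at x) \<and> 0 \<le> y" by blast
  qed
  then show ?thesis by simp
qed

lemma xlogx_gap_ge:
  fixes q c :: real assumes "0 \<le> q" "q \<le> c" "1 \<le> c"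
  shows "(q - 1)^2 / (2 * c) \<le> xlogx q - q + 1"
proof (cases "q \<le> 1")
  case True
  have "(q - 1)^2 / (2 * c) \<le> (q - 1)^2 / 2"
    using assms by (intro divide_left_mono) auto
  moreover have "(1 - q)^2 / 2 \<le> xlogx q - q + 1"
  proof (cases "q = 0")
    case False
    then show ?thesis
      using xlnx_gap_ge_half_square[of q] True assms by (simp add: xlogx_def)
  qed (simp add: xlogx_def)
  ultimately show ?thesis by (simp add: power2_commute)
next
  case False
  have "(q - 1)^2 / (2 * c) \<le> (q - 1)^2 / (2 * q)"
    using assms False by (intro divide_left_mono) auto
  with xlnx_gap_ge_square_div[of q] False show ?thesis by (simp add: xlogx_def)
qed

lemma xlogx_gap_le_square:
  fixes q :: real assumes "0 \<le> q"
  shows "xlogx q - q + 1 \<le> (q - 1)^2"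
proof (cases "q = 0")
  case False
  with assms have "q * ln q \<le> q * (q - 1)"
    using ln_le_minus_one[of q] by (intro mult_left_mono) auto
  with False show ?thesis by (simp add: xlogx_def power2_eq_square algebra_simps)
qed (simp add: xlogx_def)

lemma xlogx_mult:
  fixes a x :: real assumes "0 \<le> a" "0 \<le> x"
  shows "xlogx (a * x) = a * xlogx x + a * x * ln a"
  using assms by (auto simp: xlogx_def ln_mult algebra_simps)

lemma sum_scaled_deviation_square:
  fixes p :: "'a \<Rightarrow> real"
  assumes "sum p A = 1"
  shows "(\<Sum>i\<in>A. (card A * p i - 1)^2) = card A * (card A * (\<Sum>i\<in>A. (p i)^2) - 1)"
proof -
  have "(\<Sum>i\<in>A. (card A * p i - 1)^2) = (\<Sum>i\<in>A. card A^2 * (p i)^2 - 2 * card A * p i + 1)"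
    by (simp add: power2_eq_square algebra_simps)
  also have "\<dots> = card A^2 * (\<Sum>i\<in>A. (p i)^2) - 2 * card A * sum p A + card A"
    by (simp add: sum.distrib sum_subtractf sum_distrib_left)
  finally show ?thesis
    using assms by (simp add: power2_eq_square algebra_simps)
qed

lemma card_gt_0_of_sum_eq_1:
  fixes p :: "'a \<Rightarrow> real"
  assumes "sum p A = 1"
  shows "card A > 0"
  using assms by (metis card_gt_0_iff empty_iff sum.empty sum.infinite zero_neq_one)

lemma entropy_gap_eq_sum_xlogx_gap:
  fixes p :: "'a \<Rightarrow> real"
  assumes "\<And>i. i \<in> A \<Longrightarrow> 0 \<le> p i" "sum p A = 1"
  shows "(\<Sum>i\<in>A. xlogx (p i)) + ln (card A)
       = (\<Sum>i\<in>A. xlogx (card A * p i) - card A * p i + 1) / card A"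
proof -
  have "(\<Sum>i\<in>A. xlogx (card A * p i) - card A * p i + 1)
      = (\<Sum>i\<in>A. card A * xlogx (p i) + card A * p i * ln (card A) - card A * p i + 1)"
    using assms(1) by (intro sum.cong) (simp_all add: xlogx_mult)
  also have "\<dots> = card A * ((\<Sum>i\<in>A. xlogx (p i)) + ln (card A))"
    using assms(2) by (simp add: sum.distrib sum_subtractf sum_distrib_left[symmetric]
        sum_distrib_right[symmetric] algebra_simps)
  finally show ?thesis
    using card_gt_0_of_sum_eq_1[OF assms(2)] by simp
qed

lemma entropy_gap_le:
  fixes p :: "'a \<Rightarrow> real"
  assumes "\<And>i. i \<in> A \<Longrightarrow> 0 \<le> p i" "sum p A = 1"
  shows "(\<Sum>i\<in>A. xlogx (p i)) + ln (card A) \<le> card A * (\<Sum>i\<in>A. (p i)^2) - 1"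
proof -
  have "(\<Sum>i\<in>A. xlogx (p i)) + ln (card A)
      = (\<Sum>i\<in>A. xlogx (card A * p i) - card A * p i + 1) / card A"
    by (rule entropy_gap_eq_sum_xlogx_gap[OF assms])
  also have "\<dots> \<le> (\<Sum>i\<in>A. (card A * p i - 1)^2) / card A"
    using assms(1) by (intro divide_right_mono sum_mono xlogx_gap_le_square) simp_all
  also have "\<dots> = card A * (\<Sum>i\<in>A. (p i)^2) - 1"
    using card_gt_0_of_sum_eq_1[OF assms(2)]
    unfolding sum_scaled_deviation_square[OF assms(2)] by simp
  finally show ?thesis .
qed

lemma entropy_gap_ge:
  fixes p :: "'a \<Rightarrow> real" and M :: real
  assumes "\<And>i. i \<in> A \<Longrightarrow> 0 \<le> p i" "sum p A = 1" and le_M: "\<And>i. i \<in> A \<Longrightarrow> p i \<le> M"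
  shows "(card A * (\<Sum>i\<in>A. (p i)^2) - 1) / (2 * (card A * M + 1))
       \<le> (\<Sum>i\<in>A. xlogx (p i)) + ln (card A)"
proof -
  define c where "c = card A * M + 1"
  obtain j where "j \<in> A"
    using assms(2) by fastforce
  then have "0 \<le> M"
    using assms(1) le_M by (meson order_trans)
  then have "1 \<le> c"
    unfolding c_def by simp
  have "(card A * (\<Sum>i\<in>A. (p i)^2) - 1) / (2 * c) = (\<Sum>i\<in>A. (card A * p i - 1)^2 / (2 * c)) / card A"
    using card_gt_0_of_sum_eq_1[OF assms(2)]
    unfolding sum_divide_distrib[symmetric] sum_scaled_deviation_square[OF assms(2)] by simp
  also have "\<dots> \<le> (\<Sum>i\<in>A. xlogx (card A * p i) - card A * p i + 1) / card A"
    using assms(1) le_M \<open>1 \<le> c\<close> unfolding c_def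
    by (intro divide_right_mono sum_mono xlogx_gap_ge) (simp_all add: mult_left_mono add_increasing2)
  also have "\<dots> = (\<Sum>i\<in>A. xlogx (p i)) + ln (card A)"
    by (rule entropy_gap_eq_sum_xlogx_gap[OF assms(1,2), symmetric])
  finally show ?thesis
    unfolding c_def .
qed

lemma sum_squares_gt_of_nonuniform:
  fixes p :: "'a \<Rightarrow> real"
  assumes "sum p A = 1" "\<exists>i\<in>A. p i \<noteq> 1 / card A"
  shows "card A * (\<Sum>i\<in>A. (p i)^2) - 1 > 0"
proof -
  obtain j where "j \<in> A" "p j \<noteq> 1 / card A"
    using assms(2) by blast
  have "card A > 0"
    using card_gt_0_of_sum_eq_1[OF assms(1)] .
  then have "finite A"
    using card_gt_0_iff by blast
  from \<open>card A > 0\<close> \<open>p j \<noteq> 1 / card A\<close> have "0 < (card A * p j - 1)^2"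
    by (auto simp: field_simps)
  also have "\<dots> \<le> (\<Sum>i\<in>A. (card A * p i - 1)^2)"
    using \<open>finite A\<close> \<open>j \<in> A\<close> by (intro member_le_sum) auto
  finally show ?thesis
    unfolding sum_scaled_deviation_square[OF assms(1)] using \<open>card A > 0\<close>
    by (simp add: zero_less_mult_iff)
qed

lemma le_sup_norm:
  assumes "i \<in> {1..n}"
  shows "p i \<le> sup_norm n p"
proof -
  have "\<bar>p i\<bar> \<le> sup_norm n p"
    unfolding sup_norm_def using assms by (intro Max_ge) auto
  then show ?thesis by simp
qed

theorem proposition1:
  fixes n :: nat and p :: "nat \<Rightarrow> real"
  assumes "p \<in> prob_simplex n"
  shows "(real n * (\<Sum>i=1..n. (p i)^2) - 1) / (2 * (real n * sup_norm n p + 1))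
           \<le> (\<Sum>i=1..n. xlogx (p i)) + ln (real n)
       \<and> (\<Sum>i=1..n. xlogx (p i)) + ln (real n) \<le> real n * (\<Sum>i=1..n. (p i)^2) - 1
       \<and> ((\<exists>i\<in>{1..n}. p i \<noteq> 1 / real n) \<longrightarrow>
            real n * (\<Sum>i=1..n. (p i)^2) - 1 > 0
          \<and> 1 / (2 * (real n * sup_norm n p + 1))
              \<le> ((\<Sum>i=1..n. xlogx (p i)) + ln (real n)) / (real n * (\<Sum>i=1..n. (p i)^2) - 1)
          \<and> ((\<Sum>i=1..n. xlogx (p i)) + ln (real n)) / (real n * (\<Sum>i=1..n. (p i)^2) - 1) \<le> 1)"
proof -
  define D where "D = real n * (\<Sum>i=1..n. (p i)^2) - 1"
  define T where "T = (\<Sum>i=1..n. xlogx (p i)) + ln (real n)"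
  define c where "c = 2 * (real n * sup_norm n p + 1)"
  have nonneg: "\<And>i. i \<in> {1..n} \<Longrightarrow> 0 \<le> p i" and total: "sum p {1..n} = 1"
    using assms unfolding prob_simplex_def by auto
  have lower: "D / c \<le> T"
    using entropy_gap_ge[OF nonneg total le_sup_norm] unfolding D_def T_def c_def by simp
  have upper: "T \<le> D"
    using entropy_gap_le[OF nonneg total] unfolding D_def T_def by simp
  have "0 < D \<and> 1 / c \<le> T / D \<and> T / D \<le> 1" if "\<exists>i\<in>{1..n}. p i \<noteq> 1 / real n"
  proof -
    have "0 < D"
      using sum_squares_gt_of_nonuniform[OF total] that unfolding D_def by simp
    have "1 / c = (D / c) / D"
      using \<open>0 < D\<close> by simp
    also have "\<dots> \<le> T / D"
      using lower \<open>0 < D\<close> by (intro divide_right_mono) simp_all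
    finally show ?thesis
      using upper \<open>0 < D\<close> by simp
  qed
  with lower upper show ?thesis
    unfolding D_def T_def c_def by blast
qed

end
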